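(* Let $(r_t)_{t\ge0}$ be a continuous-time Markov chain on $\{1,2\}$ with $r_0=1$, rate $\lambda_{12}>0$ of jumping from regime 1 to regime 2 and rate $\lambda_{21}>0$ of jumping from regime 2 to regime 1. Let $0=\tau_0<\tau_1<\tau_2<\cdots$ be its successive regime-change times and $N_t$ the number of regime changes in $[0,t)$. For $k\ge1$ and $t\ge0$, the cumulative distribution functions $F_{\tau_l}(t)=P(\tau_l\le t)$ satisfy $$F_{\tau_{2k}}(t)=D(k,k,2k)\sum_{l=0}^{\infty}C(k,2k,l)\,\gamma(2k+l,\lambda_{21}t),$$ $$F_{\tau_{2k+1}}(t)=D(k+1,k+1,2k+1)\sum_{l=0}^{\infty}C(k+1,2k+1,l)\,\gamma(2k+l+1,\lambda_{21}t).$$ Moreover, for every $k\in\mathbb{N}$, $$p_k(t):=P(N_t=k)=F_{\tau_k}(t)-F_{\tau_{k+1}}(t).$$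
   Context: Notation: for integers $m,n$ and $l\ge1$, $D(m,n,l)=\dfrac{\lambda_{12}^m}{\lambda_{21}^n\,\Gamma(l)}$, and $D(m,n,0)=0$. The Pochhammer symbol is $a^{(0)}=1$, $a^{(l)}=a(a+1)\cdots(a+l-1)$. For $l>0$, $C(m,n,l)=\dfrac{m^{(l)}\left(1-\frac{\lambda_{12}}{\lambda_{21}}\right)^l}{n^{(l)}\,l!}$, and $C(m,n,0)=1$. $\gamma(a,z)=\int_0^z x^{a-1}e^{-x}\,dx$ is the lower incomplete Gamma function. *)

theory Defs
  imports "HOL-Probability.Probability"
begin

definition lower_gamma :: "real \<Rightarrow> real \<Rightarrow> real" where
  "lower_gamma a z = integral {0..z} (\<lambda>x. x powr (a - 1) * exp (- x))"

definition Dcoef :: "real \<Rightarrow> real \<Rightarrow> nat \<Rightarrow> nat \<Rightarrow> nat \<Rightarrow> real" where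
  "Dcoef lam12 lam21 m n l =
     (if l = 0 then 0 else lam12 ^ m / (lam21 ^ n * Gamma (real l)))"

definition Ccoef :: "real \<Rightarrow> real \<Rightarrow> nat \<Rightarrow> nat \<Rightarrow> nat \<Rightarrow> real" where
  "Ccoef lam12 lam21 m n l =
     (if l = 0 then 1
      else pochhammer (real m) l * (1 - lam12 / lam21) ^ l / (pochhammer (real n) l * fact l))"

(* Jump-hold description of the chain started in regime 1:
   S i = sojourn time in the i-th visited regime (regime 1 for even i, regime 2 for odd i).
   tau l = time of the l-th regime change, tau 0 = 0. *)
definition tau :: "(nat \<Rightarrow> 'a \<Rightarrow> real) \<Rightarrow> nat \<Rightarrow> 'a \<Rightarrow> real" where
  "tau S l \<omega> = (\<Sum>i<l. S i \<omega>)"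

definition regime :: "(nat \<Rightarrow> 'a \<Rightarrow> real) \<Rightarrow> real \<Rightarrow> 'a \<Rightarrow> nat" where
  "regime S t \<omega> = (if even (card {l. 1 \<le> l \<and> tau S l \<omega> \<le> t}) then 1 else 2)"

definition Ncount :: "(nat \<Rightarrow> 'a \<Rightarrow> real) \<Rightarrow> real \<Rightarrow> 'a \<Rightarrow> nat" where
  "Ncount S t \<omega> = card {l. 1 \<le> l \<and> tau S l \<omega> < t}"

definition Ftau :: "'a measure \<Rightarrow> (nat \<Rightarrow> 'a \<Rightarrow> real) \<Rightarrow> nat \<Rightarrow> real \<Rightarrow> real" where
  "Ftau M S l t = measure M {\<omega> \<in> space M. tau S l \<omega> \<le> t}"

end

(*
  The n-th regime change time is tau_n = X + Y, where X is the sum of the ceil(n/2) sojourns in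
  regime 1 and Y the sum of the floor(n/2) sojourns in regime 2; X and Y are independent Erlang
  variables with rates lambda12 and lambda21. On [0, z] the convolution integrand is
  exp (-lambda21 z) exp ((lambda21 - lambda12) (z - y)) times a polynomial; expanding the second
  exponential into its power series turns every term into a beta integral, so the density of
  tau_n is an absolutely convergent series in z^N exp (-lambda21 z). Integrating it termwise
  over [0, t] gives the lower incomplete Gamma functions.

  Almost surely all sojourns are positive, no jump happens exactly at time t (the tau_n have
  densities) and the jump times are unbounded (tau_(2m+1) dominates an Erlang variable of
  growing shape). On that event N_t = k exactly when tau_k <= t < tau_(k+1).
*)
theory Submission
  imports Defs
begin

section \<open>Convolutions of Erlang densities\<close>

lemma has_bochner_integral_beta_polynomial:
  fixes z :: real
  assumes z: "0 \<le> z"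
  shows "has_bochner_integral lborel (\<lambda>y. indicator {0..z} y * ((z - y) ^ i * y ^ j))
           (fact i * fact j / fact (i + j + 1) * z ^ (i + j + 1))"
proof (rule has_bochner_integral_nn_integral)
  let ?f = "\<lambda>y. indicator {0..z} y * ((z - y) ^ i * y ^ j)"
  define C where "C = exp (- z) / (fact i * fact j)"
  have C: "0 < C"
    unfolding C_def by simp
  \<comment> \<open>the convolution of two unit-rate Erlang densities is \<open>C\<close> times the beta integrand\<close>
  have "(\<integral>\<^sup>+y. ennreal (erlang_density i 1 (z - y)) * ennreal (erlang_density j 1 y) \<partial>lborel)
      = (\<integral>\<^sup>+y. ennreal C * ennreal (?f y) \<partial>lborel)"
  proof (intro nn_integral_cong)
    fix y :: real
    show "ennreal (erlang_density i 1 (z - y)) * ennreal (erlang_density j 1 y) = ennreal C * ennreal (?f y)"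
    proof (cases "0 \<le> y \<and> y \<le> z")
      case True
      have "exp (- (z - y)) * exp (- y) = exp (- z)"
        by (simp flip: exp_add)
      then have "erlang_density i 1 (z - y) * erlang_density j 1 y = C * ?f y"
        using True unfolding erlang_density_def C_def by (auto simp: field_simps)
      then show ?thesis
        using C True by (simp add: ennreal_mult[symmetric])
    next
      case False
      then show ?thesis
        by (auto simp: erlang_density_def)
    qed
  qed
  also have "\<dots> = ennreal C * (\<integral>\<^sup>+y. ennreal (?f y) \<partial>lborel)"
    by (rule nn_integral_cmult) auto
  finally have "ennreal C * (\<integral>\<^sup>+y. ennreal (?f y) \<partial>lborel) = erlang_density (i + j + 1) 1 z"
    using fun_cong[OF convolution_erlang_density[of 1 i j], of z] by simp
  also have "\<dots> = ennreal C * ennreal (fact i * fact j / fact (i + j + 1) * z ^ (i + j + 1))"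
    using z C unfolding erlang_density_def C_def by (simp add: ennreal_mult[symmetric] field_simps)
  finally show "(\<integral>\<^sup>+y. ennreal (?f y) \<partial>lborel) = ennreal (fact i * fact j / fact (i + j + 1) * z ^ (i + j + 1))"
    using C ennreal_mult_cancel_left[of "ennreal C"] by simp
qed (use z in \<open>auto simp: indicator_def\<close>)

lemma sums_integral_of_summable_abs:
  fixes u :: "nat \<Rightarrow> 'a \<Rightarrow> real"
  assumes "\<And>l. integrable M (u l)" and "\<And>x. (\<lambda>l. u l x) sums f x"
    and "\<And>x. summable (\<lambda>l. \<bar>u l x\<bar>)" and "summable (\<lambda>l. \<integral>x. \<bar>u l x\<bar> \<partial>M)"
  shows "integrable M f" and "(\<lambda>l. integral\<^sup>L M (u l)) sums integral\<^sup>L M f"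
proof -
  have "f = (\<lambda>x. \<Sum>l. u l x)"
    using assms(2) by (auto simp: sums_iff)
  then show "integrable M f" and "(\<lambda>l. integral\<^sup>L M (u l)) sums integral\<^sup>L M f"
    using integrable_suminf[of M u] sums_integral[of M u] assms(1,3,4) by auto
qed

lemma sums_exp_real: "(\<lambda>l. x ^ l / fact l) sums exp (x :: real)"
  using exp_converges[of x] by (simp add: divide_inverse mult.commute)

definition erlang_conv_coeff :: "real \<Rightarrow> real \<Rightarrow> nat \<Rightarrow> nat \<Rightarrow> nat \<Rightarrow> real" where
  "erlang_conv_coeff a b p q l =
     a ^ (p + 1) * b ^ (q + 1) * (b - a) ^ l * fact (p + l) / (fact l * fact p * fact (p + q + 1 + l))"

lemma summable_erlang_conv_coeff:
  fixes r :: real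
  assumes "0 \<le> r"
  shows "summable (\<lambda>l. \<bar>erlang_conv_coeff a b p q l\<bar> * r ^ l)"
proof (rule summable_comparison_test')
  let ?c = "\<bar>a ^ (p + 1) * b ^ (q + 1)\<bar>"
  show "summable (\<lambda>l. ?c * ((\<bar>b - a\<bar> * r) ^ l / fact l))"
    using summable_exp_generic[of "\<bar>b - a\<bar> * r"] by (simp add: divide_inverse mult.commute)
  fix l
  define F :: real where "F = fact (p + l) / (fact p * fact (p + q + 1 + l))"
  have "fact (p + l) \<le> (fact (p + q + 1 + l) :: real)"
    by (intro fact_mono) auto
  also have "\<dots> \<le> fact p * fact (p + q + 1 + l)"
    by simp
  finally have F: "0 \<le> F" "F \<le> 1"
    unfolding F_def by simp_all
  have "\<bar>erlang_conv_coeff a b p q l\<bar> * r ^ l = ?c * ((\<bar>b - a\<bar> * r) ^ l / fact l) * F"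
    using assms unfolding erlang_conv_coeff_def F_def
    by (simp add: abs_mult power_abs power_mult_distrib field_simps del: fact_Suc)
  also have "\<dots> \<le> ?c * ((\<bar>b - a\<bar> * r) ^ l / fact l)"
    using F assms by (intro mult_left_le) auto
  finally show "norm (\<bar>erlang_conv_coeff a b p q l\<bar> * r ^ l) \<le> ?c * ((\<bar>b - a\<bar> * r) ^ l / fact l)"
    using assms by (simp add: abs_mult power_abs)
qed

definition erlang_conv_density :: "real \<Rightarrow> real \<Rightarrow> nat \<Rightarrow> nat \<Rightarrow> real \<Rightarrow> real" where
  "erlang_conv_density a b p q z = (\<integral>y. erlang_density p a (z - y) * erlang_density q b y \<partial>lborel)"

lemma erlang_conv_density_sums:
  fixes a b z :: real
  assumes a: "0 < a" and b: "0 < b" and z: "0 \<le> z"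
  shows "integrable lborel (\<lambda>y. erlang_density p a (z - y) * erlang_density q b y)"
    and "(\<lambda>l. erlang_conv_coeff a b p q l * z ^ (p + q + 1 + l) * exp (- b * z))
           sums erlang_conv_density a b p q z"
proof -
  define A where "A = a ^ (p + 1) * b ^ (q + 1) / (fact p * fact q) * exp (- b * z)"
  define c where "c l = A * ((b - a) ^ l / fact l)" for l
  define w where "w l y = indicator {0..z} y * ((z - y) ^ (p + l) * y ^ q)" for l y
  define u where "u l y = c l * w l y" for l y
  have w: "has_bochner_integral lborel (w l) (fact (p + l) * fact q / fact (p + l + q + 1) * z ^ (p + l + q + 1))" for l
    unfolding w_def by (rule has_bochner_integral_beta_polynomial[OF z])
  have w_nonneg: "0 \<le> w l y" for l y
    unfolding w_def by (simp add: indicator_def)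
  have integral_u: "integral\<^sup>L lborel (u l) = erlang_conv_coeff a b p q l * z ^ (p + q + 1 + l) * exp (- b * z)" for l
  proof -
    have "integral\<^sup>L lborel (u l) = c l * integral\<^sup>L lborel (w l)"
      unfolding u_def by simp
    also have "\<dots> = erlang_conv_coeff a b p q l * z ^ (p + q + 1 + l) * exp (- b * z)"
      unfolding has_bochner_integral_integral_eq[OF w] c_def A_def erlang_conv_coeff_def
      by (simp add: ac_simps power_add del: fact_Suc)
    finally show ?thesis .
  qed
  have integral_abs_u: "(\<integral>y. \<bar>u l y\<bar> \<partial>lborel) = \<bar>erlang_conv_coeff a b p q l\<bar> * z ^ l * (z ^ (p + q + 1) * exp (- b * z))" for l
  proof -
    have "(\<integral>y. \<bar>u l y\<bar> \<partial>lborel) = \<bar>c l\<bar> * integral\<^sup>L lborel (w l)"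
      unfolding u_def using w_nonneg by (simp add: abs_mult)
    also have "\<dots> = \<bar>integral\<^sup>L lborel (u l)\<bar>"
      unfolding u_def using has_bochner_integral_integral_eq[OF w] z by (simp add: abs_mult)
    finally show ?thesis
      using z unfolding integral_u by (simp add: abs_mult power_add ac_simps)
  qed
  define B where "B y = A * (z - y) ^ p * y ^ q" for y
  define x where "x y = (b - a) * (z - y)" for y
  have u: "u l y = (if 0 \<le> y \<and> y \<le> z then B y * (x y ^ l / fact l) else 0)" for l y
    unfolding u_def c_def w_def B_def x_def by (simp add: power_add power_mult_distrib ac_simps)
  have density: "erlang_density p a (z - y) * erlang_density q b y
      = (if 0 \<le> y \<and> y \<le> z then B y * exp (x y) else 0)" for y
  proof -
    have "exp (- b * z) * exp (x y) = exp (- a * (z - y)) * exp (- b * y)"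
      unfolding x_def by (simp add: algebra_simps flip: exp_add)
    then show ?thesis
      unfolding B_def A_def erlang_density_def by (auto simp: field_simps)
  qed
  have u_sums: "(\<lambda>l. u l y) sums (erlang_density p a (z - y) * erlang_density q b y)" for y
    unfolding u density using sums_mult[OF sums_exp_real[of "x y"], of "B y"] by (cases "0 \<le> y \<and> y \<le> z") auto
  have u_summable_abs: "summable (\<lambda>l. \<bar>u l y\<bar>)" for y
  proof (cases "0 \<le> y \<and> y \<le> z")
    case True
    have "summable (\<lambda>l. \<bar>B y\<bar> * (\<bar>x y\<bar> ^ l / fact l))"
      by (intro summable_mult sums_summable[OF sums_exp_real])
    then show ?thesis
      using True by (simp add: u abs_mult power_abs)
  qed (auto simp: u)
  have "summable (\<lambda>l. \<integral>y. \<bar>u l y\<bar> \<partial>lborel)"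
    unfolding integral_abs_u by (intro summable_mult2 summable_erlang_conv_coeff z)
  moreover have "integrable lborel (u l)" for l
    unfolding u_def using w by (auto simp: has_bochner_integral_iff)
  ultimately have "integrable lborel (\<lambda>y. erlang_density p a (z - y) * erlang_density q b y)"
    and "(\<lambda>l. integral\<^sup>L lborel (u l)) sums (\<integral>y. erlang_density p a (z - y) * erlang_density q b y \<partial>lborel)"
    using sums_integral_of_summable_abs[of lborel u, OF _ u_sums u_summable_abs] by blast+
  then show "integrable lborel (\<lambda>y. erlang_density p a (z - y) * erlang_density q b y)"
    and "(\<lambda>l. erlang_conv_coeff a b p q l * z ^ (p + q + 1 + l) * exp (- b * z))
           sums erlang_conv_density a b p q z"
    unfolding integral_u erlang_conv_density_def .
qed

lemma has_bochner_integral_power_exp_Icc: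
  fixes b t :: real
  assumes b: "0 < b" and t: "0 \<le> t"
  shows "has_bochner_integral lborel (\<lambda>z. indicator {0..t} z * (z ^ N * exp (- b * z)))
           (fact N / b ^ (N + 1) * erlang_CDF N b t)"
proof -
  have "(\<integral>\<^sup>+z. ennreal (erlang_density N b z * indicator {..t} z) \<partial>lborel) = erlang_CDF N b t"
    using nn_integral_erlang_density[OF b] by (simp add: indicator_mult_ennreal mult.commute)
  then have "has_bochner_integral lborel (\<lambda>z. erlang_density N b z * indicator {..t} z) (erlang_CDF N b t)"
    using b by (intro has_bochner_integral_nn_integral) auto
  then have "has_bochner_integral lborel (\<lambda>z. fact N / b ^ (N + 1) * (erlang_density N b z * indicator {..t} z))
      (fact N / b ^ (N + 1) * erlang_CDF N b t)"
    by (rule has_bochner_integral_mult_right)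
  moreover have "fact N / b ^ (N + 1) * (erlang_density N b z * indicator {..t} z)
      = indicator {0..t} z * (z ^ N * exp (- b * z))" for z
    using b by (cases "0 \<le> z \<and> z \<le> t") (auto simp: erlang_density_def indicator_def)
  ultimately show ?thesis
    by simp
qed

lemma erlang_CDF_le_power:
  fixes b t :: real
  assumes b: "0 < b" and t: "0 \<le> t"
  shows "erlang_CDF N b t \<le> (b * t) ^ (N + 1) / fact N"
proof -
  have "fact N / b ^ (N + 1) * erlang_CDF N b t = (\<integral>z. indicator {0..t} z * (z ^ N * exp (- b * z)) \<partial>lborel)"
    using has_bochner_integral_power_exp_Icc[OF b t] by (simp add: has_bochner_integral_iff)
  also have "\<dots> \<le> (\<integral>z. indicator {0..t} z * t ^ N \<partial>lborel)"
  proof (rule integral_mono)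
    show "integrable lborel (\<lambda>z. indicator {0..t} z * (z ^ N * exp (- b * z)))"
      using has_bochner_integral_power_exp_Icc[OF b t] by (simp add: has_bochner_integral_iff)
    show "integrable lborel (\<lambda>z. indicator {0..t} z * t ^ N :: real)"
      by (intro integrable_mult_left) (simp add: t)
    show "indicator {0..t} z * (z ^ N * exp (- b * z)) \<le> indicator {0..t} z * t ^ N" for z
    proof (cases "0 \<le> z \<and> z \<le> t")
      case True
      then have "z ^ N * exp (- b * z) \<le> t ^ N * 1"
        using b by (intro mult_mono power_mono) auto
      then show ?thesis
        using True by simp
    qed simp
  qed
  also have "\<dots> = t ^ (N + 1)"
    using t by simp
  finally show ?thesis
    using b by (simp add: field_simps power_mult_distrib)
qed

lemma lower_gamma_Suc_eq_erlang_CDF: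
  assumes s: "0 \<le> s"
  shows "lower_gamma (real (Suc N)) s = fact N * erlang_CDF N 1 s"
proof -
  have "has_bochner_integral lborel (\<lambda>z. indicator {0..s} z * (z ^ N * exp (- z))) (fact N * erlang_CDF N 1 s)"
    using has_bochner_integral_power_exp_Icc[of 1 s N] s by simp
  then have "((\<lambda>z. indicator {0..s} z * (z ^ N * exp (- z))) has_integral fact N * erlang_CDF N 1 s) UNIV"
    unfolding has_bochner_integral_iff using has_integral_integral_lborel by metis
  also have "(\<lambda>z. indicator {0..s} z * (z ^ N * exp (- z))) = (\<lambda>z. if z \<in> {0..s} then z ^ N * exp (- z) else 0)"
    by (simp add: fun_eq_iff)
  finally have "((\<lambda>z. z ^ N * exp (- z)) has_integral fact N * erlang_CDF N 1 s) {0..s}"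
    unfolding has_integral_restrict_UNIV .
  moreover have "lower_gamma (real (Suc N)) s = integral {0..s} (\<lambda>z. z ^ N * exp (- z))"
    unfolding lower_gamma_def by (rule integral_spike[of "{0}"]) (auto simp: powr_realpow)
  ultimately show ?thesis
    by (simp add: integral_unique)
qed

lemma pochhammer_Suc_of_nat: "pochhammer (real (Suc m)) l = fact (m + l) / fact m"
proof -
  have "(fact (m + l) :: real) = pochhammer 1 m * pochhammer (1 + real m) l"
    by (simp add: pochhammer_fact pochhammer_product')
  then show ?thesis
    by (simp add: pochhammer_fact[symmetric] field_simps)
qed

lemma erlang_conv_coeff_eq_Dcoef_Ccoef:
  assumes b: "0 < b"
  shows "erlang_conv_coeff a b p q l / b ^ (p + q + 2 + l)
           = Dcoef a b (Suc p) (Suc p) (p + q + 2) * Ccoef a b (Suc p) (p + q + 2) l"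
proof -
  have "Gamma (real (p + q + 2)) = fact (p + q + 1)"
    using Gamma_fact[of "p + q + 1", where 'a=real] by (simp add: add_ac)
  then have D: "Dcoef a b (Suc p) (Suc p) (p + q + 2) = a ^ (p + 1) / (b ^ (p + 1) * fact (p + q + 1))"
    unfolding Dcoef_def by simp
  have "1 - a / b = (b - a) / b"
    using b by (simp add: field_simps)
  moreover have "pochhammer (real (p + q + 2)) l = fact (p + q + 1 + l) / fact (p + q + 1)"
    using pochhammer_Suc_of_nat[of "p + q + 1" l] by (simp add: add_ac)
  ultimately have C: "Ccoef a b (Suc p) (p + q + 2) l
      = fact (p + l) / fact p * ((b - a) ^ l / b ^ l) / (fact (p + q + 1 + l) / fact (p + q + 1) * fact l)"
    unfolding Ccoef_def pochhammer_Suc_of_nat by (simp add: power_divide)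
  show ?thesis
    using b unfolding D C erlang_conv_coeff_def by (simp add: field_simps power_add del: fact_Suc)
qed

lemma erlang_conv_CDF_term_eq_lower_gamma:
  assumes b: "0 < b" and t: "0 \<le> t"
  shows "erlang_conv_coeff a b p q l * (fact (p + q + 1 + l) / b ^ (p + q + 2 + l) * erlang_CDF (p + q + 1 + l) b t)
       = Dcoef a b (Suc p) (Suc p) (p + q + 2) * Ccoef a b (Suc p) (p + q + 2) l
           * lower_gamma (real (p + q + 2 + l)) (b * t)"
proof -
  have "lower_gamma (real (p + q + 2 + l)) (b * t) = fact (p + q + 1 + l) * erlang_CDF (p + q + 1 + l) b t"
    using lower_gamma_Suc_eq_erlang_CDF[of "b * t" "p + q + 1 + l"] erlang_CDF_transform[OF b, of "p + q + 1 + l" t] b t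
    by simp
  then have "Dcoef a b (Suc p) (Suc p) (p + q + 2) * Ccoef a b (Suc p) (p + q + 2) l
           * lower_gamma (real (p + q + 2 + l)) (b * t)
      = erlang_conv_coeff a b p q l / b ^ (p + q + 2 + l) * (fact (p + q + 1 + l) * erlang_CDF (p + q + 1 + l) b t)"
    by (simp only: erlang_conv_coeff_eq_Dcoef_Ccoef[OF b])
  then show ?thesis
    by (simp add: divide_inverse mult_ac)
qed

lemma erlang_conv_density_nonneg: "0 < a \<Longrightarrow> 0 < b \<Longrightarrow> 0 \<le> erlang_conv_density a b p q z"
  unfolding erlang_conv_density_def by (intro integral_nonneg_AE) auto

lemma erlang_convolution_neg:
  "z < 0 \<Longrightarrow> (\<lambda>y. erlang_density p a (z - y) * erlang_density q b y) = (\<lambda>_. 0)"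
  by (auto simp: erlang_density_def fun_eq_iff)

lemma erlang_conv_density_neg: "z < 0 \<Longrightarrow> erlang_conv_density a b p q z = 0"
  unfolding erlang_conv_density_def by (simp add: erlang_convolution_neg)

lemma nn_integral_erlang_convolution:
  assumes a: "0 < a" and b: "0 < b"
  shows "(\<integral>\<^sup>+y. ennreal (erlang_density p a (z - y)) * ennreal (erlang_density q b y) \<partial>lborel)
           = ennreal (erlang_conv_density a b p q z)"
proof -
  have "(\<integral>\<^sup>+y. ennreal (erlang_density p a (z - y)) * ennreal (erlang_density q b y) \<partial>lborel)
      = (\<integral>\<^sup>+y. ennreal (erlang_density p a (z - y) * erlang_density q b y) \<partial>lborel)"
    using a b by (simp add: ennreal_mult)
  also have "\<dots> = ennreal (erlang_conv_density a b p q z)"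
  proof (cases "z < 0")
    case True
    then show ?thesis
      by (simp add: erlang_convolution_neg[OF True, unfolded fun_eq_iff] erlang_conv_density_neg)
  next
    case False
    then show ?thesis
      unfolding erlang_conv_density_def using a b erlang_conv_density_sums(1)[OF a b, of z p q]
      by (intro nn_integral_eq_integral) auto
  qed
  finally show ?thesis .
qed

lemma erlang_conv_density_CDF_sums:
  fixes a b t :: real
  assumes a: "0 < a" and b: "0 < b" and t: "0 \<le> t"
  shows "integrable lborel (\<lambda>z. indicator {..t} z * erlang_conv_density a b p q z)"
    and "(\<lambda>l. erlang_conv_coeff a b p q l * (fact (p + q + 1 + l) / b ^ (p + q + 2 + l) * erlang_CDF (p + q + 1 + l) b t))
           sums (\<integral>z. indicator {..t} z * erlang_conv_density a b p q z \<partial>lborel)"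
proof -
  define N where "N l = p + q + 1 + l" for l
  define K where "K l = erlang_conv_coeff a b p q l" for l
  define v where "v l z = indicator {0..t} z * (z ^ N l * exp (- b * z))" for l z
  have v: "has_bochner_integral lborel (v l) (fact (N l) / b ^ (N l + 1) * erlang_CDF (N l) b t)" for l
    unfolding v_def using b t by (rule has_bochner_integral_power_exp_Icc)
  have v_nonneg: "0 \<le> v l z" for l z
    unfolding v_def by (simp add: indicator_def)
  have integral_abs: "(\<integral>z. \<bar>K l * v l z\<bar> \<partial>lborel) \<le> \<bar>K l\<bar> * t ^ l * t ^ (p + q + 2)" for l
  proof -
    have "(\<integral>z. \<bar>K l * v l z\<bar> \<partial>lborel) = \<bar>K l\<bar> * (fact (N l) / b ^ (N l + 1) * erlang_CDF (N l) b t)"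
      using v_nonneg has_bochner_integral_integral_eq[OF v] by (simp add: abs_mult)
    also have "\<dots> \<le> \<bar>K l\<bar> * (fact (N l) / b ^ (N l + 1) * ((b * t) ^ (N l + 1) / fact (N l)))"
      using b t erlang_CDF_le_power[OF b t, of "N l"] by (intro mult_left_mono) auto
    also have "\<dots> = \<bar>K l\<bar> * t ^ l * t ^ (p + q + 2)"
      using b unfolding N_def by (simp add: power_mult_distrib power_add)
    finally show ?thesis .
  qed
  have "summable (\<lambda>l. \<bar>K l\<bar> * t ^ l * t ^ (p + q + 2))"
    unfolding K_def by (intro summable_mult2 summable_erlang_conv_coeff t)
  moreover have "norm (\<integral>z. \<bar>K l * v l z\<bar> \<partial>lborel) \<le> \<bar>K l\<bar> * t ^ l * t ^ (p + q + 2)" for l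
  proof -
    have "0 \<le> (\<integral>z. \<bar>K l * v l z\<bar> \<partial>lborel)"
      by (rule integral_nonneg_AE) simp
    then show ?thesis
      using integral_abs[of l] by simp
  qed
  ultimately have summable_integral_abs: "summable (\<lambda>l. \<integral>z. \<bar>K l * v l z\<bar> \<partial>lborel)"
    by (rule summable_comparison_test')
  have Kv: "K l * v l z = (if 0 \<le> z \<and> z \<le> t then K l * z ^ (p + q + 1 + l) * exp (- b * z) else 0)" for l z
    unfolding v_def N_def by simp
  have sums: "(\<lambda>l. K l * v l z) sums (indicator {..t} z * erlang_conv_density a b p q z)" for z
  proof (cases "0 \<le> z \<and> z \<le> t")
    case True
    then show ?thesis
      using erlang_conv_density_sums(2)[OF a b, of z p q] by (simp add: K_def Kv[unfolded K_def])
  qed (auto simp: Kv erlang_conv_density_neg)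
  have summable_abs: "summable (\<lambda>l. \<bar>K l * v l z\<bar>)" for z
  proof (cases "0 \<le> z \<and> z \<le> t")
    case True
    have "summable (\<lambda>l. \<bar>K l\<bar> * z ^ l * (z ^ (p + q + 1) * exp (- b * z)))"
      using True unfolding K_def by (intro summable_mult2 summable_erlang_conv_coeff) auto
    moreover have "(\<lambda>l. \<bar>K l * v l z\<bar>) = (\<lambda>l. \<bar>K l\<bar> * z ^ l * (z ^ (p + q + 1) * exp (- b * z)))"
      using True unfolding Kv by (auto simp: abs_mult power_add)
    ultimately show ?thesis
      by simp
  qed (auto simp: Kv)
  have "integrable lborel (\<lambda>z. K l * v l z)" for l
    using v by (auto simp: has_bochner_integral_iff)
  then have "integrable lborel (\<lambda>z. indicator {..t} z * erlang_conv_density a b p q z)"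
    and "(\<lambda>l. integral\<^sup>L lborel (\<lambda>z. K l * v l z)) sums (\<integral>z. indicator {..t} z * erlang_conv_density a b p q z \<partial>lborel)"
    using sums_integral_of_summable_abs[OF _ sums summable_abs summable_integral_abs] by blast+
  moreover have "integral\<^sup>L lborel (\<lambda>z. K l * v l z)
      = erlang_conv_coeff a b p q l * (fact (p + q + 1 + l) / b ^ (p + q + 2 + l) * erlang_CDF (p + q + 1 + l) b t)" for l
    using has_bochner_integral_integral_eq[OF v] unfolding K_def N_def by simp
  ultimately show "integrable lborel (\<lambda>z. indicator {..t} z * erlang_conv_density a b p q z)"
    and "(\<lambda>l. erlang_conv_coeff a b p q l * (fact (p + q + 1 + l) / b ^ (p + q + 2 + l) * erlang_CDF (p + q + 1 + l) b t))
           sums (\<integral>z. indicator {..t} z * erlang_conv_density a b p q z \<partial>lborel)"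
    by simp_all
qed

section \<open>Jump times and jump counts\<close>

lemma erlang_CDF_tendsto_0: "(\<lambda>n. erlang_CDF n l t) \<longlonglongrightarrow> 0"
proof (cases "t < 0")
  case False
  have "(\<lambda>n. \<Sum>m<Suc n. (l * t) ^ m / fact m) \<longlonglongrightarrow> exp (l * t)"
    using sums_exp_real[of "l * t"] unfolding sums_def by (rule LIMSEQ_Suc)
  then have "(\<lambda>n. \<Sum>m\<le>n. (l * t) ^ m / fact m) \<longlonglongrightarrow> exp (l * t)"
    by (simp only: lessThan_Suc_atMost)
  then have "(\<lambda>n. 1 - exp (- l * t) * (\<Sum>m\<le>n. (l * t) ^ m / fact m)) \<longlonglongrightarrow> 1 - exp (- l * t) * exp (l * t)"
    by (intro tendsto_intros)
  then show ?thesis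
    using False by (simp add: erlang_CDF_def sum_distrib_left mult_ac flip: exp_add)
qed (simp add: erlang_CDF_def)

lemma tau_eq_even_plus_odd_sojourns:
  "tau S n \<omega> = (\<Sum>j<(n + 1) div 2. S (2 * j) \<omega>) + (\<Sum>j<n div 2. S (2 * j + 1) \<omega>)"
proof (induction n)
  case (Suc n)
  have "tau S (Suc n) \<omega> = tau S n \<omega> + S n \<omega>"
    by (simp add: tau_def)
  with Suc show ?case
    by (cases "even n") (auto elim!: evenE oddE)
qed (simp add: tau_def)

lemma card_Collect_less_eq_iff:
  fixes T :: "nat \<Rightarrow> real"
  assumes T0: "T 0 = 0" and mono: "strict_mono T" and t: "0 \<le> t"
    and no_hit: "\<And>j. 1 \<le> j \<Longrightarrow> T j \<noteq> t" and unbounded: "\<exists>l. t \<le> T l"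
  shows "card {l. 1 \<le> l \<and> T l < t} = k \<longleftrightarrow> T k \<le> t \<and> t < T (Suc k)"
proof -
  have card_between: "card {l. 1 \<le> l \<and> T l < t} = m" if "T m \<le> t" "t < T (Suc m)" for m
  proof -
    have "1 \<le> l \<and> T l < t \<longleftrightarrow> l \<in> {1..m}" for l
    proof
      assume "1 \<le> l \<and> T l < t"
      then show "l \<in> {1..m}"
        using strict_mono_less[OF mono, of l "Suc m"] \<open>t < T (Suc m)\<close> by auto
    next
      assume "l \<in> {1..m}"
      then show "1 \<le> l \<and> T l < t"
        using \<open>T m \<le> t\<close> no_hit[of l] strict_mono_less_eq[OF mono, of l m] by fastforce
    qed
    then have "{l. 1 \<le> l \<and> T l < t} = {1..m}"
      by blast
    then show ?thesis
      by simp
  qed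
  obtain l where "t \<le> T l"
    using unbounded by blast
  then have "t < T (Suc l)"
    using strict_monoD[OF mono, of l "Suc l"] by simp
  then obtain m where "T m \<le> t" "t < T (Suc m)"
    using ex_least_nat_less[of "\<lambda>i. t < T i" "Suc l"] T0 t by (auto simp: not_less)
  then show ?thesis
    using card_between by metis
qed

lemma sets_Collect_card_eq:
  fixes P :: "nat \<Rightarrow> 'a \<Rightarrow> bool"
  assumes [measurable]: "\<And>i. Measurable.pred M (P i)"
  shows "{\<omega> \<in> space M. card {i. P i \<omega>} = k} \<in> sets M"
proof -
  \<comment> \<open>a finite set of naturals is the set of a list, which ranges over a countable type\<close>
  have "card {i. P i \<omega>} = k \<longleftrightarrow>
      (\<exists>xs :: nat list. card (set xs) = k \<and> (\<forall>i. P i \<omega> \<longleftrightarrow> i \<in> set xs)) \<or>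
      (k = 0 \<and> (\<forall>n. \<exists>i\<ge>n. P i \<omega>))" for \<omega>
  proof (cases "finite {i. P i \<omega>}")
    case True
    then obtain ys where ys: "set ys = {i. P i \<omega>}"
      using finite_list by blast
    have "(\<exists>xs :: nat list. card (set xs) = k \<and> (\<forall>i. P i \<omega> \<longleftrightarrow> i \<in> set xs)) \<longleftrightarrow> card {i. P i \<omega>} = k"
    proof
      assume "\<exists>xs :: nat list. card (set xs) = k \<and> (\<forall>i. P i \<omega> \<longleftrightarrow> i \<in> set xs)"
      then obtain xs :: "nat list" where "card (set xs) = k" "set xs = {i. P i \<omega>}"
        by blast
      then show "card {i. P i \<omega>} = k"
        by simp
    next
      assume "card {i. P i \<omega>} = k"
      with ys show "\<exists>xs :: nat list. card (set xs) = k \<and> (\<forall>i. P i \<omega> \<longleftrightarrow> i \<in> set xs)"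
        by (intro exI[of _ ys]) auto
    qed
    moreover have "\<not> (\<forall>n. \<exists>i\<ge>n. P i \<omega>)"
      using True infinite_nat_iff_unbounded_le[of "{i. P i \<omega>}"] by auto
    ultimately show ?thesis
      by blast
  next
    case False
    then have "set xs \<noteq> {i. P i \<omega>}" for xs :: "nat list"
      by (metis List.finite_set)
    moreover have "\<forall>n. \<exists>i\<ge>n. P i \<omega>"
      using False infinite_nat_iff_unbounded_le[of "{i. P i \<omega>}"] by auto
    ultimately show ?thesis
      using False by auto
  qed
  then show ?thesis
    by simp
qed

lemma (in prob_space) prob_distributed_singleton:
  assumes "distributed M lborel X f"
  shows "prob {\<omega> \<in> space M. X \<omega> = c} = 0"
proof -
  have "emeasure M {\<omega> \<in> space M. X \<omega> = c} = (\<integral>\<^sup>+x. f x * indicator {c} x \<partial>lborel)"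
    using distributed_emeasure[OF assms, of "{c}"] by (simp add: vimage_def Int_def conj_commute)
  also have "\<dots> = 0"
    using AE_lborel_singleton[of c] by (intro nn_integral_zero') auto
  finally show ?thesis
    by (simp add: emeasure_eq_measure)
qed

lemma (in prob_space) indep_var_sum_disjoint:
  fixes X :: "'i \<Rightarrow> 'a \<Rightarrow> real"
  assumes indep: "indep_vars (\<lambda>_. borel) X I"
    and "A \<inter> B = {}" "A \<subseteq> I" "B \<subseteq> I" "finite A" "finite B"
  shows "indep_var borel (\<lambda>\<omega>. \<Sum>i\<in>A. X i \<omega>) borel (\<lambda>\<omega>. \<Sum>i\<in>B. X i \<omega>)"
proof -
  have "indep_var
      borel ((\<lambda>f. \<Sum>i\<in>A. f i) \<circ> (\<lambda>\<omega>. restrict (\<lambda>i. X i \<omega>) A))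
      borel ((\<lambda>f. \<Sum>i\<in>B. f i) \<circ> (\<lambda>\<omega>. restrict (\<lambda>i. X i \<omega>) B))"
    using assms by (intro indep_var_compose[OF indep_var_restrict[OF indep]]) auto
  then show ?thesis
    by (simp add: comp_def cong: sum.cong)
qed

lemma (in prob_space) distributed_add_erlang:
  assumes "0 < a" "0 < b" and "indep_var borel X borel Y"
    and "distributed M lborel X (erlang_density p a)" and "distributed M lborel Y (erlang_density q b)"
  shows "distributed M lborel (\<lambda>\<omega>. X \<omega> + Y \<omega>) (erlang_conv_density a b p q)"
  using distributed_convolution[OF assms(3-5)] nn_integral_erlang_convolution[OF assms(1,2)] by simp

lemma (in prob_space) prob_add_erlang_le_sums:
  assumes a: "0 < a" and b: "0 < b" and t: "0 \<le> t" and XY: "indep_var borel X borel Y"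
    and X: "distributed M lborel X (erlang_density p a)" and Y: "distributed M lborel Y (erlang_density q b)"
  shows "(\<lambda>l. erlang_conv_coeff a b p q l * (fact (p + q + 1 + l) / b ^ (p + q + 2 + l) * erlang_CDF (p + q + 1 + l) b t))
           sums prob {\<omega> \<in> space M. X \<omega> + Y \<omega> \<le> t}"
proof -
  have "emeasure M {\<omega> \<in> space M. X \<omega> + Y \<omega> \<le> t}
      = (\<integral>\<^sup>+z. ennreal (erlang_conv_density a b p q z) * indicator {..t} z \<partial>lborel)"
    using distributed_emeasure[OF distributed_add_erlang[OF a b XY X Y], of "{..t}"]
    by (simp add: vimage_def Int_def conj_commute)
  also have "\<dots> = ennreal (\<integral>z. indicator {..t} z * erlang_conv_density a b p q z \<partial>lborel)"
    using erlang_conv_density_CDF_sums(1)[OF a b t, of p q] erlang_conv_density_nonneg[OF a b]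
    by (subst nn_integral_eq_integral[symmetric]) (auto simp: indicator_mult_ennreal mult.commute)
  finally have "prob {\<omega> \<in> space M. X \<omega> + Y \<omega> \<le> t} = (\<integral>z. indicator {..t} z * erlang_conv_density a b p q z \<partial>lborel)"
    using erlang_conv_density_nonneg[OF a b]
    by (simp add: emeasure_eq_measure integral_nonneg_AE measure_nonneg)
  then show ?thesis
    using erlang_conv_density_CDF_sums(2)[OF a b t] by simp
qed

locale alternating_sojourns = prob_space M
  for M :: "'a measure" and S :: "nat \<Rightarrow> 'a \<Rightarrow> real" and a b :: real +
  assumes rates_pos: "0 < a" "0 < b"
    and indep_sojourns: "indep_vars (\<lambda>_. borel) S UNIV"
    and sojourn_even: "\<And>j. distributed M lborel (S (2 * j)) (exponential_density a)"
    and sojourn_odd: "\<And>j. distributed M lborel (S (2 * j + 1)) (exponential_density b)"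
begin

lemma measurable_sojourn [measurable]: "S i \<in> borel_measurable M"
  using indep_sojourns unfolding indep_vars_def by auto

lemma measurable_tau [measurable]: "tau S n \<in> borel_measurable M"
  unfolding tau_def[abs_def] by measurable

lemma distributed_sum_even_sojourns:
  "distributed M lborel (\<lambda>\<omega>. \<Sum>j<Suc m. S (2 * j) \<omega>) (erlang_density m a)"
proof -
  have "distributed M lborel (\<lambda>\<omega>. \<Sum>i\<in>(\<lambda>j. 2 * j) ` {..<Suc m}. S i \<omega>)
      (erlang_density (card ((\<lambda>j. 2 * j) ` {..<Suc m}) - 1) a)"
    using rates_pos by (intro exponential_distributed_sum indep_vars_subset[OF indep_sojourns])
      (auto simp: sojourn_even)
  then show ?thesis
    by (simp add: sum.reindex card_image inj_on_def)
qed

lemma distributed_sum_odd_sojourns: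
  "distributed M lborel (\<lambda>\<omega>. \<Sum>j<Suc m. S (2 * j + 1) \<omega>) (erlang_density m b)"
proof -
  have "distributed M lborel (S (Suc (2 * j))) (exponential_density b)" for j
    using sojourn_odd[of j] by simp
  then have "distributed M lborel (\<lambda>\<omega>. \<Sum>i\<in>(\<lambda>j. 2 * j + 1) ` {..<Suc m}. S i \<omega>)
      (erlang_density (card ((\<lambda>j. 2 * j + 1) ` {..<Suc m}) - 1) b)"
    using rates_pos by (intro exponential_distributed_sum indep_vars_subset[OF indep_sojourns]) auto
  then show ?thesis
    by (simp add: sum.reindex card_image inj_on_def)
qed

lemma indep_sums_even_odd_sojourns:
  "indep_var borel (\<lambda>\<omega>. \<Sum>j<m. S (2 * j) \<omega>) borel (\<lambda>\<omega>. \<Sum>j<k. S (2 * j + 1) \<omega>)"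
proof -
  have "(\<lambda>j. 2 * j) ` {..<m} \<inter> (\<lambda>j. 2 * j + 1) ` {..<k} = {}"
    by auto presburger
  then have "indep_var borel (\<lambda>\<omega>. \<Sum>i\<in>(\<lambda>j. 2 * j) ` {..<m}. S i \<omega>)
      borel (\<lambda>\<omega>. \<Sum>i\<in>(\<lambda>j. 2 * j + 1) ` {..<k}. S i \<omega>)"
    by (intro indep_var_sum_disjoint[OF indep_sojourns]) auto
  then show ?thesis
    by (simp add: sum.reindex inj_on_def)
qed

lemma distributed_tau:
  assumes "(n + 1) div 2 = Suc p" and "n div 2 = Suc q"
  shows "distributed M lborel (tau S n) (erlang_conv_density a b p q)"
proof -
  have "distributed M lborel (\<lambda>\<omega>. (\<Sum>j<Suc p. S (2 * j) \<omega>) + (\<Sum>j<Suc q. S (2 * j + 1) \<omega>))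
      (erlang_conv_density a b p q)"
    using rates_pos by (intro distributed_add_erlang indep_sums_even_odd_sojourns
        distributed_sum_even_sojourns distributed_sum_odd_sojourns)
  then show ?thesis
    using assms by (simp add: tau_eq_even_plus_odd_sojourns[abs_def])
qed

lemma prob_tau_le_sums:
  assumes "(n + 1) div 2 = Suc p" and "n div 2 = Suc q" and t: "0 \<le> t"
  shows "(\<lambda>l. Dcoef a b (Suc p) (Suc p) (p + q + 2) * Ccoef a b (Suc p) (p + q + 2) l
              * lower_gamma (real (p + q + 2 + l)) (b * t)) sums Ftau M S n t"
proof -
  have "(\<lambda>l. Dcoef a b (Suc p) (Suc p) (p + q + 2) * Ccoef a b (Suc p) (p + q + 2) l
              * lower_gamma (real (p + q + 2 + l)) (b * t))
      sums prob {\<omega> \<in> space M. (\<Sum>j<Suc p. S (2 * j) \<omega>) + (\<Sum>j<Suc q. S (2 * j + 1) \<omega>) \<le> t}"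
    using prob_add_erlang_le_sums[OF rates_pos t indep_sums_even_odd_sojourns
        distributed_sum_even_sojourns distributed_sum_odd_sojourns]
    unfolding erlang_conv_CDF_term_eq_lower_gamma[OF rates_pos(2) t] .
  then show ?thesis
    unfolding Ftau_def by (simp only: tau_eq_even_plus_odd_sojourns assms)
qed

lemma prob_tau_even_le_sums:
  assumes k: "1 \<le> k" and t: "0 \<le> t"
  shows "(\<lambda>l. Dcoef a b k k (2 * k) * Ccoef a b k (2 * k) l * lower_gamma (real (2 * k + l)) (b * t))
           sums Ftau M S (2 * k) t"
proof -
  obtain p where "k = Suc p"
    using k by (cases k) auto
  then have "(2 * k + 1) div 2 = Suc p" "2 * k div 2 = Suc p" "Suc p = k" "p + p + 2 = 2 * k"
    by auto
  then show ?thesis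
    using prob_tau_le_sums[of "2 * k" p p t, OF _ _ t] by (simp only:)
qed

lemma prob_tau_odd_le_sums:
  assumes k: "1 \<le> k" and t: "0 \<le> t"
  shows "(\<lambda>l. Dcoef a b (k + 1) (k + 1) (2 * k + 1) * Ccoef a b (k + 1) (2 * k + 1) l
              * lower_gamma (real (2 * k + l + 1)) (b * t)) sums Ftau M S (2 * k + 1) t"
proof -
  obtain q where "k = Suc q"
    using k by (cases k) auto
  then have "(2 * k + 1 + 1) div 2 = Suc k" "(2 * k + 1) div 2 = Suc q" "Suc k = k + 1"
      "k + q + 2 = 2 * k + 1" "real (2 * k + 1 + l) = real (2 * k + l + 1)" for l
    by auto
  then show ?thesis
    using prob_tau_le_sums[of "2 * k + 1" k q t, OF _ _ t] by (simp only:)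
qed

lemma prob_tau_eq:
  assumes "1 \<le> n"
  shows "prob {\<omega> \<in> space M. tau S n \<omega> = t} = 0"
proof (cases "n = 1")
  case True
  then have "tau S n = S 0"
    by (simp add: tau_def fun_eq_iff)
  then show ?thesis
    using prob_distributed_singleton[OF sojourn_even[of 0]] by simp
next
  case False
  with assms have "(n + 1) div 2 = Suc ((n + 1) div 2 - 1)" and "n div 2 = Suc (n div 2 - 1)"
    by auto
  then show ?thesis
    by (rule prob_distributed_singleton[OF distributed_tau])
qed

lemma AE_sojourns_pos: "AE \<omega> in M. \<forall>i. 0 < S i \<omega>"
proof -
  have "prob {\<omega> \<in> space M. S i \<omega> \<le> 0} = 0" for i
  proof (cases "even i")
    case True
    then obtain j where "i = 2 * j"
      by blast
    then show ?thesis
      using exponential_distributedD_le[OF sojourn_even[of j], of 0] rates_pos by simp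
  next
    case False
    then obtain j where "i = 2 * j + 1"
      by (blast elim: oddE)
    then show ?thesis
      using exponential_distributedD_le[OF sojourn_odd[of j], of 0] rates_pos by simp
  qed
  then have "AE \<omega> in M. \<not> S i \<omega> \<le> 0" for i
    by (subst prob_Collect_eq_0[symmetric]) auto
  then show ?thesis
    by (simp add: AE_all_countable not_le)
qed

lemma AE_tau_neq: "AE \<omega> in M. \<forall>j\<ge>1. tau S j \<omega> \<noteq> t"
proof -
  have "AE \<omega> in M. 1 \<le> j \<longrightarrow> tau S j \<omega> \<noteq> t" for j
  proof (cases "1 \<le> j")
    case True
    then have "AE \<omega> in M. tau S j \<omega> \<noteq> t"
      using prob_tau_eq[of j t] by (subst prob_Collect_eq_0[symmetric]) auto
    then show ?thesis
      by simp
  qed simp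
  then show ?thesis
    by (simp add: AE_all_countable)
qed

lemma AE_tau_unbounded:
  assumes t: "0 \<le> t"
  shows "AE \<omega> in M. \<exists>l. t \<le> tau S l \<omega>"
proof -
  define E where "E = {\<omega> \<in> space M. \<forall>l. tau S l \<omega> < t}"
  have [measurable]: "E \<in> sets M"
    unfolding E_def by measurable
  have "prob E \<le> erlang_CDF n a t" for n
  proof -
    have "AE \<omega> in M. \<omega> \<in> E \<longrightarrow> \<omega> \<in> {\<omega> \<in> space M. (\<Sum>j<Suc n. S (2 * j) \<omega>) \<le> t}"
      using AE_sojourns_pos
    proof eventually_elim
      case (elim \<omega>)
      have "0 \<le> (\<Sum>j<n. S (2 * j + 1) \<omega>)"
        using elim by (intro sum_nonneg) (simp add: less_imp_le)
      then have "(\<Sum>j<Suc n. S (2 * j) \<omega>) \<le> tau S (2 * n + 1) \<omega>"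
        by (simp add: tau_eq_even_plus_odd_sojourns)
      then show ?case
        unfolding E_def by (auto intro: order.trans[OF _ less_imp_le])
    qed
    then have "prob E \<le> prob {\<omega> \<in> space M. (\<Sum>j<Suc n. S (2 * j) \<omega>) \<le> t}"
      by (intro finite_measure_mono_AE) auto
    also have "\<dots> = erlang_CDF n a t"
      using erlang_distributed_le[OF distributed_sum_even_sojourns rates_pos(1) t] by simp
    finally show ?thesis .
  qed
  then have "prob E \<le> 0"
    by (intro LIMSEQ_le_const[OF erlang_CDF_tendsto_0]) auto
  then have "AE \<omega> in M. \<omega> \<notin> E"
    using measure_nonneg[of M E] prob_eq_0[of E] by simp
  then show ?thesis
    unfolding E_def by (auto elim!: eventually_mono simp: not_less)
qed

lemma prob_Ncount_eq:
  assumes t: "0 \<le> t"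
  shows "prob {\<omega> \<in> space M. Ncount S t \<omega> = k} = Ftau M S k t - Ftau M S (k + 1) t"
proof -
  define E where "E n = {\<omega> \<in> space M. tau S n \<omega> \<le> t}" for n
  have [measurable]: "E n \<in> sets M" for n
    unfolding E_def by measurable
  have "{\<omega> \<in> space M. Ncount S t \<omega> = k} \<in> sets M"
    unfolding Ncount_def by (rule sets_Collect_card_eq) measurable
  moreover have "AE \<omega> in M. \<omega> \<in> {\<omega> \<in> space M. Ncount S t \<omega> = k} \<longleftrightarrow> \<omega> \<in> E k - (E k \<inter> E (Suc k))"
    using AE_sojourns_pos AE_tau_neq[of t] AE_tau_unbounded[OF t]
  proof eventually_elim
    case (elim \<omega>)
    have "strict_mono (\<lambda>n. tau S n \<omega>)"
      using elim(1) by (intro strict_monoI_Suc) (simp add: tau_def)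
    then have "Ncount S t \<omega> = k \<longleftrightarrow> tau S k \<omega> \<le> t \<and> t < tau S (Suc k) \<omega>"
      unfolding Ncount_def using elim(2,3) t by (intro card_Collect_less_eq_iff) (auto simp: tau_def)
    then show ?case
      unfolding E_def by auto
  qed
  ultimately have "prob {\<omega> \<in> space M. Ncount S t \<omega> = k} = prob (E k - (E k \<inter> E (Suc k)))"
    by (intro measure_eq_AE) auto
  also have "\<dots> = prob (E k) - prob (E k \<inter> E (Suc k))"
    by (intro finite_measure_Diff) auto
  \<comment> \<open>\<open>E (Suc k) \<subseteq> E k\<close> holds only almost surely, hence the detour through \<open>E k \<inter> E (Suc k)\<close>\<close>
  also have "prob (E k \<inter> E (Suc k)) = prob (E (Suc k))"
  proof (intro measure_eq_AE)
    show "AE \<omega> in M. \<omega> \<in> E k \<inter> E (Suc k) \<longleftrightarrow> \<omega> \<in> E (Suc k)"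
      using AE_sojourns_pos
    proof eventually_elim
      case (elim \<omega>)
      then have "tau S k \<omega> \<le> tau S (Suc k) \<omega>"
        by (simp add: tau_def less_imp_le)
      then show ?case
        unfolding E_def by auto
    qed
  qed auto
  finally show ?thesis
    unfolding E_def Ftau_def by simp
qed

end

theorem lemma3:
  fixes M :: "'a measure" and S :: "nat \<Rightarrow> 'a \<Rightarrow> real" and lam12 lam21 :: real
  assumes "prob_space M"
    and "lam12 > 0" and "lam21 > 0"
    and "prob_space.indep_vars M (\<lambda>_. borel) S UNIV"
    and "\<And>j. distributed M lborel (S (2 * j)) (exponential_density lam12)"
    and "\<And>j. distributed M lborel (S (2 * j + 1)) (exponential_density lam21)"
  shows "(\<forall>k::nat. \<forall>t::real. k \<ge> 1 \<and> t \<ge> 0 \<longrightarrow>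
            (\<lambda>l. Dcoef lam12 lam21 k k (2 * k) * Ccoef lam12 lam21 k (2 * k) l
                  * lower_gamma (real (2 * k + l)) (lam21 * t)) sums Ftau M S (2 * k) t
          \<and> (\<lambda>l. Dcoef lam12 lam21 (k + 1) (k + 1) (2 * k + 1) * Ccoef lam12 lam21 (k + 1) (2 * k + 1) l
                  * lower_gamma (real (2 * k + l + 1)) (lam21 * t)) sums Ftau M S (2 * k + 1) t)
       \<and> (\<forall>k::nat. \<forall>t::real. t \<ge> 0 \<longrightarrow>
            measure M {\<omega> \<in> space M. Ncount S t \<omega> = k} = Ftau M S k t - Ftau M S (k + 1) t)"
proof -
  interpret alternating_sojourns M S lam12 lam21
    by (intro alternating_sojourns.intro alternating_sojourns_axioms.intro assms)
  show ?thesis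
    by (intro conjI allI impI; (elim conjE)?)
      (assumption | rule prob_tau_even_le_sums prob_tau_odd_le_sums prob_Ncount_eq)+
qed

end
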